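(* Let $p_{\mathcal{M}}$ be a probability distribution over a set $\mathcal{M}$ of Markov decision processes $m=(\mathcal{S}_m,\mathcal{A},r_m,\mathcal{P}_m,\rho_m,\gamma)$ with common action space $\mathcal{A}$ and common discount factor $\gamma\in(0,1)$, let $\mathcal{M}_{\mathrm{train}}\subset\mathcal{M}$ with $M=\int_{\mathcal{M}_{\mathrm{train}}}p_{\mathcal{M}}(m)\,\mathrm{d}m>0$ and $p_{\mathcal{M}_{\mathrm{train}}}(m)=p_{\mathcal{M}}(m)\mathbb{I}(m\in\mathcal{M}_{\mathrm{train}})/M$. Assume each state of $m$ is written $s=\phi_m(u)$ with $u$ in a set $\mathcal{U}$ independent of $m$ and $\phi_m:\mathcal{U}\to\mathcal{S}_m$. Let $\pi,\tilde\pi$ be any two policies and $A_{\max}=\max_{m,s,a}|A_m^{\pi}(s,a)|$. Then $$\eta(\tilde\pi)=\eta(\pi)+\mathbb{E}_{m\sim p_{\mathcal{M}_{\mathrm{train}}},\,s\sim\rho^m_{\tilde\pi},\,a\sim\tilde\pi(\cdot|s)}\left[A_m^\pi(s,a)\right],$$ and $$\eta(\tilde\pi)\geq L_\pi(\tilde\pi)-\frac{4\gamma A_{\max}}{(1-\gamma)^2}\,\mathbb{E}_{m\sim p_{\mathcal{M}_{\mathrm{train}}}}\left\{\max_{u\in\mathcal{U}}D_{\mathrm{TV}}\left[\pi(\cdot|\phi_m(u)),\tilde\pi(\cdot|\phi_m(u))\right]^2\right\},$$ where $L_\pi(\tilde\pi)=\eta(\pi)+\mathbb{E}_{m\sim 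p_{\mathcal{M}_{\mathrm{train}}},\,s\sim\rho^m_{\pi},\,a\sim\tilde\pi(\cdot|s)}\left[A_m^\pi(s,a)\right]$.
   Context: State and action spaces are discrete. A policy $\pi$ assigns to each state $s$ a distribution $\pi(\cdot|s)$ on $\mathcal{A}$. In MDP $m$: $Q_m^\pi(s_t,a_t)=\mathbb{E}\left[\sum_{k\ge0}\gamma^k r_m(s_{t+k},a_{t+k})\right]$ (trajectory continued under $\pi$ and $\mathcal{P}_m$), $V_m^\pi(s)=\mathbb{E}_{a\sim\pi(\cdot|s)}[Q_m^\pi(s,a)]$, $A_m^\pi=Q_m^\pi-V_m^\pi$. The training objective is $\eta(\pi)=\mathbb{E}_{m\sim p_{\mathcal{M}_{\mathrm{train}}}}\mathbb{E}_{\tau_m\sim\pi}\left[\sum_{t\ge0}\gamma^t r_m(s_t^m,a_t^m)\right]$ with $s_0^m\sim\rho_m$, $a_t^m\sim\pi(\cdot|s_t^m)$, $s_{t+1}^m\sim\mathcal{P}_m(\cdot|s_t^m,a_t^m)$. The unnormalized discounted visitation frequency is $\rho^m_\pi(s)=\sum_{t\ge0}\gamma^t\,\mathbb{P}(s_t^m=s\mid m,\pi)$, and "$s\sim\rho_\pi^m$" denotes expectation weighted by it. $D_{\mathrm{TV}}$ is total variation distance. *)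

theory Defs
  imports "HOL-Probability.Probability"
begin

definition step_sa :: "('s \<Rightarrow> 'a \<Rightarrow> 's pmf) \<Rightarrow> ('s \<Rightarrow> 'a pmf) \<Rightarrow> 's \<times> 'a \<Rightarrow> ('s \<times> 'a) pmf" where
  "step_sa P pol x = bind_pmf (P (fst x) (snd x)) (\<lambda>s'. map_pmf (\<lambda>a'. (s', a')) (pol s'))"

primrec sa_dist :: "('s \<Rightarrow> 'a \<Rightarrow> 's pmf) \<Rightarrow> ('s \<Rightarrow> 'a pmf) \<Rightarrow> 's \<Rightarrow> 'a \<Rightarrow> nat \<Rightarrow> ('s \<times> 'a) pmf" where
  "sa_dist P pol s a 0 = return_pmf (s, a)"
| "sa_dist P pol s a (Suc k) = bind_pmf (sa_dist P pol s a k) (step_sa P pol)"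

primrec state_dist :: "('s \<Rightarrow> 'a \<Rightarrow> 's pmf) \<Rightarrow> ('s \<Rightarrow> 'a pmf) \<Rightarrow> 's pmf \<Rightarrow> nat \<Rightarrow> 's pmf" where
  "state_dist P pol rho0 0 = rho0"
| "state_dist P pol rho0 (Suc t) = bind_pmf (state_dist P pol rho0 t) (\<lambda>s. bind_pmf (pol s) (\<lambda>a. P s a))"

definition Qfun :: "('s \<Rightarrow> 'a \<Rightarrow> 's pmf) \<Rightarrow> ('s \<Rightarrow> 'a \<Rightarrow> real) \<Rightarrow> real \<Rightarrow> ('s \<Rightarrow> 'a pmf) \<Rightarrow> 's \<Rightarrow> 'a \<Rightarrow> real" where
  "Qfun P r \<gamma> pol s a =
     (\<Sum>k. \<gamma> ^ k * measure_pmf.expectation (sa_dist P pol s a k) (\<lambda>x. r (fst x) (snd x)))"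

definition Vfun :: "('s \<Rightarrow> 'a \<Rightarrow> 's pmf) \<Rightarrow> ('s \<Rightarrow> 'a \<Rightarrow> real) \<Rightarrow> real \<Rightarrow> ('s \<Rightarrow> 'a pmf) \<Rightarrow> 's \<Rightarrow> real" where
  "Vfun P r \<gamma> pol s = measure_pmf.expectation (pol s) (\<lambda>a. Qfun P r \<gamma> pol s a)"

definition Adv :: "('s \<Rightarrow> 'a \<Rightarrow> 's pmf) \<Rightarrow> ('s \<Rightarrow> 'a \<Rightarrow> real) \<Rightarrow> real \<Rightarrow> ('s \<Rightarrow> 'a pmf) \<Rightarrow> 's \<Rightarrow> 'a \<Rightarrow> real" where
  "Adv P r \<gamma> pol s a = Qfun P r \<gamma> pol s a - Vfun P r \<gamma> pol s"

definition visit :: "('s \<Rightarrow> 'a \<Rightarrow> 's pmf) \<Rightarrow> ('s \<Rightarrow> 'a pmf) \<Rightarrow> 's pmf \<Rightarrow> real \<Rightarrow> 's \<Rightarrow> real" where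
  "visit P pol rho0 \<gamma> s = (\<Sum>t. \<gamma> ^ t * pmf (state_dist P pol rho0 t) s)"

definition visit_exp :: "('s \<Rightarrow> 'a \<Rightarrow> 's pmf) \<Rightarrow> ('s \<Rightarrow> 'a pmf) \<Rightarrow> 's pmf \<Rightarrow> real \<Rightarrow> ('s \<Rightarrow> real) \<Rightarrow> real" where
  "visit_exp P pol rho0 \<gamma> f = infsum (\<lambda>s. visit P pol rho0 \<gamma> s * f s) UNIV"

definition eta_mdp :: "('s \<Rightarrow> 'a \<Rightarrow> 's pmf) \<Rightarrow> ('s \<Rightarrow> 'a \<Rightarrow> real) \<Rightarrow> 's pmf \<Rightarrow> real \<Rightarrow> ('s \<Rightarrow> 'a pmf) \<Rightarrow> real" where
  "eta_mdp P r rho0 \<gamma> pol =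
     (\<Sum>t. \<gamma> ^ t * measure_pmf.expectation (state_dist P pol rho0 t)
                      (\<lambda>s. measure_pmf.expectation (pol s) (\<lambda>a. r s a)))"

definition p_train :: "'m measure \<Rightarrow> 'm set \<Rightarrow> 'm measure" where
  "p_train pM Mt = density pM (\<lambda>m. ennreal (indicator Mt m / measure pM Mt))"

definition E_train :: "'m measure \<Rightarrow> 'm set \<Rightarrow> ('m \<Rightarrow> real) \<Rightarrow> real" where
  "E_train pM Mt f = (\<integral>m. f m \<partial>(p_train pM Mt))"

definition eta :: "'m measure \<Rightarrow> 'm set \<Rightarrow> ('m \<Rightarrow> 's \<Rightarrow> 'a \<Rightarrow> 's pmf) \<Rightarrow> ('m \<Rightarrow> 's \<Rightarrow> 'a \<Rightarrow> real)
     \<Rightarrow> ('m \<Rightarrow> 's pmf) \<Rightarrow> real \<Rightarrow> ('s \<Rightarrow> 'a pmf) \<Rightarrow> real" where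
  "eta pM Mt P r rho0 \<gamma> pol = E_train pM Mt (\<lambda>m. eta_mdp (P m) (r m) (rho0 m) \<gamma> pol)"

definition adv_term :: "'m measure \<Rightarrow> 'm set \<Rightarrow> ('m \<Rightarrow> 's \<Rightarrow> 'a \<Rightarrow> 's pmf) \<Rightarrow> ('m \<Rightarrow> 's \<Rightarrow> 'a \<Rightarrow> real)
     \<Rightarrow> ('m \<Rightarrow> 's pmf) \<Rightarrow> real \<Rightarrow> ('s \<Rightarrow> 'a pmf) \<Rightarrow> ('s \<Rightarrow> 'a pmf) \<Rightarrow> ('s \<Rightarrow> 'a pmf) \<Rightarrow> real" where
  "adv_term pM Mt P r rho0 \<gamma> pol0 visitpol actpol =
     E_train pM Mt (\<lambda>m. visit_exp (P m) visitpol (rho0 m) \<gamma>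
        (\<lambda>s. measure_pmf.expectation (actpol s) (\<lambda>a. Adv (P m) (r m) \<gamma> pol0 s a)))"

definition L_surr :: "'m measure \<Rightarrow> 'm set \<Rightarrow> ('m \<Rightarrow> 's \<Rightarrow> 'a \<Rightarrow> 's pmf) \<Rightarrow> ('m \<Rightarrow> 's \<Rightarrow> 'a \<Rightarrow> real)
     \<Rightarrow> ('m \<Rightarrow> 's pmf) \<Rightarrow> real \<Rightarrow> ('s \<Rightarrow> 'a pmf) \<Rightarrow> ('s \<Rightarrow> 'a pmf) \<Rightarrow> real" where
  "L_surr pM Mt P r rho0 \<gamma> pol pol' =
     eta pM Mt P r rho0 \<gamma> pol + adv_term pM Mt P r rho0 \<gamma> pol pol pol'"

definition tv_dist :: "'a pmf \<Rightarrow> 'a pmf \<Rightarrow> real" where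
  "tv_dist p q = infsum (\<lambda>a. \<bar>pmf p a - pmf q a\<bar>) UNIV / 2"

definition A_max :: "'m measure \<Rightarrow> ('m \<Rightarrow> 's \<Rightarrow> 'a \<Rightarrow> 's pmf) \<Rightarrow> ('m \<Rightarrow> 's \<Rightarrow> 'a \<Rightarrow> real)
     \<Rightarrow> real \<Rightarrow> ('m \<Rightarrow> 'u \<Rightarrow> 's) \<Rightarrow> ('s \<Rightarrow> 'a pmf) \<Rightarrow> real" where
  "A_max pM P r \<gamma> \<phi> pol =
     Sup {\<bar>Adv (P m) (r m) \<gamma> pol s a\<bar> | m s a. m \<in> space pM \<and> s \<in> range (\<phi> m)}"

end

theory Submission
  imports Defs
begin

text \<open>
  The Bellman equation Q(s,a) = r(s,a) + gamma E[V(s')] turns the advantage of sigma, averaged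
  over the actions of tau, into E[r(s,.)] + gamma E[V(s')] - V(s). Along the trajectory of tau,
  weighted by gamma^t, the value terms telescope; this is the performance difference identity
  eta(tau) = eta(sigma) + sum_t gamma^t E[A^sigma at step t of tau], valid in every MDP.

  For the lower bound, E_(a ~ pi) A^pi(s,a) = 0, so the advantage averaged over pi'(.|s) is at
  most 2 eps alpha when |A^pi| <= eps and pi, pi' are alpha-close in total variation. Running pi'
  instead of pi for t steps moves the expectation of a c-bounded function of the state by at most
  2 t alpha c, and sum_t t gamma^t = gamma / (1 - gamma)^2, so weighting by the visitation
  frequencies of pi instead of pi' costs at most 4 eps gamma alpha^2 / (1 - gamma)^2. With
  alpha^2 = sup_u TV^2 over the states phi_m(u) of each training MDP, averaging over m gives the
  theorem.
\<close>

section \<open>Expectations over discrete distributions\<close>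

lemma integrable_measure_pmf_bounded:
  fixes f :: "'a \<Rightarrow> real"
  assumes "\<forall>x\<in>set_pmf p. \<bar>f x\<bar> \<le> c"
  shows "integrable (measure_pmf p) f"
  using assms by (intro measure_pmf.integrable_const_bound[where B=c]) (auto intro: AE_pmfI)

lemma expectation_pmf_cong:
  fixes f g :: "'a \<Rightarrow> real"
  assumes "\<forall>x\<in>set_pmf p. f x = g x"
  shows "measure_pmf.expectation p f = measure_pmf.expectation p g"
  using assms by (intro integral_cong_AE) (auto intro: AE_pmfI)

lemma abs_expectation_pmf_le:
  fixes f :: "'a \<Rightarrow> real"
  assumes "\<forall>x\<in>set_pmf p. \<bar>f x\<bar> \<le> c"
  shows "\<bar>measure_pmf.expectation p f\<bar> \<le> c"
proof -
  have f: "integrable (measure_pmf p) f" using assms by (rule integrable_measure_pmf_bounded)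
  have "measure_pmf.expectation p f \<le> measure_pmf.expectation p (\<lambda>_. c)"
    and "measure_pmf.expectation p (\<lambda>_. - c) \<le> measure_pmf.expectation p f"
    using assms f by (intro integral_mono_AE; auto intro!: AE_pmfI)+
  then show ?thesis by simp
qed

lemma expectation_bind_pmf:
  fixes g :: "'b \<Rightarrow> real"
  assumes "\<forall>y\<in>set_pmf (bind_pmf p f). \<bar>g y\<bar> \<le> c"
  shows "measure_pmf.expectation (bind_pmf p f) g =
         measure_pmf.expectation p (\<lambda>x. measure_pmf.expectation (f x) g)"
proof -
  \<comment> \<open>\<open>g\<close> is only bounded on the support, while \<open>integral_bind\<close> needs a global bound\<close>
  define T where "T = set_pmf (bind_pmf p f)"
  define g' where "g' y = (if y \<in> T then g y else 0)" for y
  have "0 \<le> c" using assms set_pmf_not_empty by fastforce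
  have "measure_pmf.expectation (bind_pmf p f) g = measure_pmf.expectation (bind_pmf p f) g'"
    by (intro expectation_pmf_cong) (auto simp: g'_def T_def)
  also have "\<dots> = integral\<^sup>L (measure_pmf p \<bind> (\<lambda>x. measure_pmf (f x))) g'"
    by (simp add: measure_pmf_bind)
  also have "\<dots> = measure_pmf.expectation p (\<lambda>x. measure_pmf.expectation (f x) g')"
    using assms \<open>0 \<le> c\<close>
    by (intro integral_bind[where K="count_space UNIV" and B=c and B'=1])
      (auto simp: g'_def T_def measure_pmf_in_subprob_algebra measure_pmf.emeasure_space_le_1)
  also have "\<dots> = measure_pmf.expectation p (\<lambda>x. measure_pmf.expectation (f x) g)"
    by (intro expectation_pmf_cong ballI) (auto simp: g'_def T_def)
  finally show ?thesis .
qed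

lemma has_sum_pmf_times:
  fixes f :: "'a \<Rightarrow> real"
  assumes "\<forall>x\<in>set_pmf p. \<bar>f x\<bar> \<le> c"
  shows "((\<lambda>x. pmf p x * f x) has_sum measure_pmf.expectation p f) UNIV"
proof -
  have abs: "Infinite_Set_Sum.abs_summable_on (\<lambda>x. pmf p x * f x) UNIV"
  proof (rule abs_summable_on_comparison_test'[where g="\<lambda>x. c * pmf p x"])
    show "Infinite_Set_Sum.abs_summable_on (\<lambda>x. c * pmf p x) UNIV"
      by (intro abs_summable_on_cmult_right pmf_abs_summable)
    show "norm (pmf p x * f x) \<le> c * pmf p x" for x
      using assms by (cases "x \<in> set_pmf p") (auto simp: set_pmf_eq abs_mult mult.commute)
  qed
  then have "(\<lambda>x. pmf p x * f x) summable_on UNIV"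
    using abs_summable_equivalent abs_summable_summable by blast
  then show ?thesis
    using infsetsum_infsum[OF abs] pmf_expectation_eq_infsetsum by (metis has_sum_infsum)
qed

lemma has_sum_pmf: "(pmf p has_sum 1) UNIV"
  using has_sum_pmf_times[of p "\<lambda>_. 1" 1] by simp

lemma summable_on_pmf: "pmf p summable_on UNIV"
  using has_sum_pmf by (rule has_sum_imp_summable)

section \<open>Total variation distance\<close>

lemma summable_on_abs_pmf_diff: "(\<lambda>a. \<bar>pmf p a - pmf q a\<bar>) summable_on UNIV"
  by (rule summable_on_comparison_test[OF summable_on_add[OF summable_on_pmf[of p] summable_on_pmf[of q]]])
    (auto simp: abs_le_iff)

lemma tv_dist_nonneg: "0 \<le> tv_dist p q"
  unfolding tv_dist_def by (auto intro: infsum_nonneg)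

lemma tv_dist_le_1: "tv_dist p q \<le> 1"
proof -
  have "infsum (\<lambda>a. \<bar>pmf p a - pmf q a\<bar>) UNIV \<le> infsum (\<lambda>a. pmf p a + pmf q a) UNIV"
    by (intro infsum_mono summable_on_abs_pmf_diff summable_on_add summable_on_pmf[of p] summable_on_pmf[of q])
      (auto simp: abs_le_iff)
  also have "\<dots> = 2"
    using has_sum_add[OF has_sum_pmf has_sum_pmf, of p q] by (simp add: infsumI)
  finally show ?thesis unfolding tv_dist_def by simp
qed

lemma abs_expectation_diff_le_tv_dist:
  fixes h :: "'a \<Rightarrow> real"
  assumes "\<forall>a. \<bar>h a\<bar> \<le> c"
  shows "\<bar>measure_pmf.expectation p h - measure_pmf.expectation q h\<bar> \<le> 2 * c * tv_dist p q"
proof -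
  have diff: "((\<lambda>x. (pmf p x - pmf q x) * h x) has_sum
      (measure_pmf.expectation p h - measure_pmf.expectation q h)) UNIV"
    using has_sum_add[OF has_sum_pmf_times[of p h c] has_sum_uminusI[OF has_sum_pmf_times[of q h c]]] assms
    by (simp add: left_diff_distrib)
  have bound: "norm ((pmf p x - pmf q x) * h x) \<le> c * \<bar>pmf p x - pmf q x\<bar>" for x
    using assms by (simp add: abs_mult mult.commute mult_right_mono)
  have majorant: "(\<lambda>x. c * \<bar>pmf p x - pmf q x\<bar>) summable_on UNIV"
    by (intro summable_on_cmult_right summable_on_abs_pmf_diff)
  have norm: "(\<lambda>x. norm ((pmf p x - pmf q x) * h x)) summable_on UNIV"
    by (rule summable_on_comparison_test[OF majorant]) (use bound in auto)
  have "\<bar>measure_pmf.expectation p h - measure_pmf.expectation q h\<bar>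
        = norm (infsum (\<lambda>x. (pmf p x - pmf q x) * h x) UNIV)"
    using infsumI[OF diff] by simp
  also have "\<dots> \<le> infsum (\<lambda>x. norm ((pmf p x - pmf q x) * h x)) UNIV"
    using norm by (rule norm_infsum_bound)
  also have "\<dots> \<le> infsum (\<lambda>x. c * \<bar>pmf p x - pmf q x\<bar>) UNIV"
    by (intro infsum_mono norm majorant bound)
  also have "\<dots> = 2 * c * tv_dist p q"
    unfolding tv_dist_def by (simp add: infsum_cmult_right summable_on_abs_pmf_diff)
  finally show ?thesis .
qed

section \<open>Discounted series\<close>

lemma
  fixes f :: "nat \<Rightarrow> real"
  assumes "\<And>k. \<bar>f k\<bar> \<le> c * \<gamma> ^ k" "0 \<le> \<gamma>" "\<gamma> < 1"
  shows summable_if_le_geometric: "summable f"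
    and abs_suminf_le_geometric: "\<bar>suminf f\<bar> \<le> c / (1 - \<gamma>)"
proof -
  have geometric: "summable (\<lambda>k. c * \<gamma> ^ k)"
    using assms by (intro summable_mult summable_geometric) auto
  have abs: "summable (\<lambda>k. \<bar>f k\<bar>)"
    using assms by (intro summable_comparison_test'[OF geometric]) auto
  then show "summable f" by (rule summable_rabs_cancel)
  have "\<bar>suminf f\<bar> \<le> (\<Sum>k. \<bar>f k\<bar>)" by (rule summable_rabs[OF abs])
  also have "\<dots> \<le> (\<Sum>k. c * \<gamma> ^ k)" by (intro suminf_le abs geometric assms)
  also have "\<dots> = c / (1 - \<gamma>)" using assms by (simp add: suminf_mult suminf_geometric divide_simps)
  finally show "\<bar>suminf f\<bar> \<le> c / (1 - \<gamma>)" .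
qed

lemma abs_power_mult_le:
  fixes \<gamma> :: real
  assumes "\<bar>x\<bar> \<le> c" "0 \<le> \<gamma>"
  shows "\<bar>\<gamma> ^ k * x\<bar> \<le> c * \<gamma> ^ k"
proof -
  have "\<bar>\<gamma> ^ k * x\<bar> = \<gamma> ^ k * \<bar>x\<bar>" using assms by (simp add: abs_mult)
  also have "\<dots> \<le> \<gamma> ^ k * c" using assms by (intro mult_left_mono) auto
  finally show ?thesis by (simp add: mult.commute)
qed

lemma summable_discounted_expectation:
  fixes p :: "nat \<Rightarrow> 'a pmf" and f :: "'a \<Rightarrow> real"
  assumes "\<And>t. \<forall>x\<in>set_pmf (p t). \<bar>f x\<bar> \<le> c" "0 \<le> \<gamma>" "\<gamma> < 1"
  shows "summable (\<lambda>t. \<gamma> ^ t * measure_pmf.expectation (p t) f)"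
  using assms
  by (intro summable_if_le_geometric[where c=c and \<gamma>=\<gamma>] abs_power_mult_le abs_expectation_pmf_le)

lemma expectation_pmf_suminf:
  fixes f :: "nat \<Rightarrow> 'a \<Rightarrow> real"
  assumes "\<forall>x\<in>set_pmf p. \<forall>k. \<bar>f k x\<bar> \<le> c * \<gamma> ^ k" "0 \<le> \<gamma>" "\<gamma> < 1"
  shows "measure_pmf.expectation p (\<lambda>x. \<Sum>k. f k x) = (\<Sum>k. measure_pmf.expectation p (f k))"
proof (rule integral_suminf)
  have geometric: "summable (\<lambda>k. c * \<gamma> ^ k)"
    using assms by (intro summable_mult summable_geometric) auto
  show "integrable (measure_pmf p) (f k)" for k
    using assms by (intro integrable_measure_pmf_bounded[where c="c * \<gamma> ^ k"]) auto
  show "AE x in measure_pmf p. summable (\<lambda>k. norm (f k x))"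
    using assms by (intro AE_pmfI summable_comparison_test'[OF geometric]) auto
  show "summable (\<lambda>k. measure_pmf.expectation p (\<lambda>x. norm (f k x)))"
  proof (rule summable_comparison_test'[OF geometric])
    show "norm (measure_pmf.expectation p (\<lambda>x. norm (f k x))) \<le> c * \<gamma> ^ k" for k
      using assms abs_expectation_pmf_le[of p "\<lambda>x. \<bar>f k x\<bar>" "c * \<gamma> ^ k"] by auto
  qed
qed

lemma sums_discounted_telescoping:
  fixes x :: "nat \<Rightarrow> real"
  assumes "\<And>t. \<bar>x t\<bar> \<le> c" "0 \<le> \<gamma>" "\<gamma> < 1"
  shows "(\<lambda>t. \<gamma> ^ t * (\<gamma> * x (Suc t) - x t)) sums (- x 0)"
proof -
  have partial: "(\<Sum>t<n. \<gamma> ^ t * (\<gamma> * x (Suc t) - x t)) = \<gamma> ^ n * x n - x 0" for n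
    by (induction n) (auto simp: algebra_simps)
  have "(\<lambda>n. \<gamma> ^ n * x n) \<longlonglongrightarrow> 0"
  proof (rule Lim_null_comparison[where g="\<lambda>n. c * \<gamma> ^ n"])
    show "\<forall>\<^sub>F n in sequentially. norm (\<gamma> ^ n * x n) \<le> c * \<gamma> ^ n"
      using assms abs_power_mult_le by (auto intro!: always_eventually)
    show "(\<lambda>n. c * \<gamma> ^ n) \<longlonglongrightarrow> 0"
      using assms by (intro tendsto_mult_right_zero LIMSEQ_power_zero) auto
  qed
  then have "(\<lambda>n. \<gamma> ^ n * x n - x 0) \<longlonglongrightarrow> 0 - x 0"
    by (intro tendsto_diff) auto
  then show ?thesis
    unfolding sums_def partial by simp
qed

lemma sums_of_nat_mult_power:
  fixes \<gamma> :: real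
  assumes "\<bar>\<gamma>\<bar> < 1"
  shows "(\<lambda>t. real t * \<gamma> ^ t) sums (\<gamma> / (1 - \<gamma>)\<^sup>2)"
proof -
  have "(\<lambda>n. real (Suc n) * \<gamma> ^ n) sums (1 / (1 - \<gamma>)\<^sup>2)"
    using assms geometric_deriv_sums[of \<gamma>] by simp
  then have "(\<lambda>n. \<gamma> * (real (Suc n) * \<gamma> ^ n)) sums (\<gamma> * (1 / (1 - \<gamma>)\<^sup>2))"
    by (rule sums_mult)
  then have "(\<lambda>n. real (Suc n) * \<gamma> ^ Suc n) sums (\<gamma> / (1 - \<gamma>)\<^sup>2)"
    by (simp add: algebra_simps)
  then show ?thesis using sums_Suc_iff[of "\<lambda>t. real t * \<gamma> ^ t"] by simp
qed

lemma summable_on_discounted_pmf_times: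
  fixes p :: "nat \<Rightarrow> 'a pmf" and f :: "'a \<Rightarrow> real"
  assumes "\<And>t. \<forall>x\<in>set_pmf (p t). \<bar>f x\<bar> \<le> c" "0 \<le> \<gamma>" "\<gamma> < 1"
  shows "(\<lambda>(t, x). \<gamma> ^ t * (pmf (p t) x * f x)) summable_on UNIV \<times> UNIV"
proof -
  let ?g = "\<lambda>t. \<gamma> ^ t * measure_pmf.expectation (p t) (\<lambda>x. \<bar>f x\<bar>)"
  have "(\<lambda>(t, x). \<bar>\<gamma> ^ t * (pmf (p t) x * f x)\<bar>) summable_on Sigma UNIV (\<lambda>_. UNIV)"
  proof (rule summable_on_SigmaI[where g="?g"])
    show "((\<lambda>x. (\<lambda>(t, x). \<bar>\<gamma> ^ t * (pmf (p t) x * f x)\<bar>) (t, x)) has_sum ?g t) UNIV" for t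
      using has_sum_cmult_right[OF has_sum_pmf_times[of "p t" "\<lambda>x. \<bar>f x\<bar>" c], of "\<gamma> ^ t"] assms
      by (simp add: abs_mult)
    have "summable ?g"
      using assms by (intro summable_discounted_expectation[where c=c]) auto
    then show "?g summable_on UNIV"
      using assms by (subst summable_on_UNIV_nonneg_real_iff) auto
  qed auto
  then show ?thesis
    using abs_summable_summable[of "\<lambda>(t, x). \<gamma> ^ t * (pmf (p t) x * f x)" "UNIV \<times> UNIV"]
    by (simp add: case_prod_unfold)
qed

lemma infsum_nat_eq_suminf:
  fixes f :: "nat \<Rightarrow> real"
  assumes "summable (\<lambda>n. norm (f n))"
  shows "infsum f UNIV = suminf f"
  using norm_summable_imp_has_sum[OF assms summable_sums[OF summable_norm_cancel[OF assms]]]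
  by (rule infsumI)

lemma infsum_discounted_pmf_times:
  fixes p :: "nat \<Rightarrow> 'a pmf" and f :: "'a \<Rightarrow> real"
  assumes f: "\<And>t. \<forall>x\<in>set_pmf (p t). \<bar>f x\<bar> \<le> c" and \<gamma>: "0 \<le> \<gamma>" "\<gamma> < 1"
  shows "infsum (\<lambda>x. (\<Sum>t. \<gamma> ^ t * pmf (p t) x) * f x) UNIV
           = (\<Sum>t. \<gamma> ^ t * measure_pmf.expectation (p t) f)"
proof -
  define h where "h t x = \<gamma> ^ t * (pmf (p t) x * f x)" for t x
  have rows: "infsum (h t) UNIV = \<gamma> ^ t * measure_pmf.expectation (p t) f" for t
    unfolding h_def using f by (intro infsumI has_sum_cmult_right has_sum_pmf_times)
  have columns: "infsum (\<lambda>t. h t x) UNIV = (\<Sum>t. \<gamma> ^ t * pmf (p t) x) * f x" for x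
  proof -
    have "\<bar>\<gamma> ^ t * pmf (p t) x\<bar> \<le> 1 * \<gamma> ^ t" for t
      using \<gamma> by (intro abs_power_mult_le) (auto simp: pmf_le_1)
    then have "summable (\<lambda>t. \<gamma> ^ t * pmf (p t) x)"
      using \<gamma> by (intro summable_if_le_geometric)
    moreover have "\<bar>h t x\<bar> \<le> \<bar>f x\<bar> * \<gamma> ^ t" for t
      unfolding h_def using \<gamma>
      by (intro abs_power_mult_le) (auto simp: abs_mult intro!: mult_left_le_one_le pmf_le_1)
    then have "summable (\<lambda>t. norm (h t x))"
      using \<gamma> by (intro summable_if_le_geometric) auto
    ultimately show ?thesis
      by (simp add: infsum_nat_eq_suminf suminf_mult2 h_def mult.assoc)
  qed
  have "infsum (\<lambda>x. (\<Sum>t. \<gamma> ^ t * pmf (p t) x) * f x) UNIV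
      = infsum (\<lambda>x. infsum (\<lambda>t. h t x) UNIV) UNIV"
    by (simp only: columns)
  also have "\<dots> = infsum (\<lambda>t. infsum (h t) UNIV) UNIV"
    using summable_on_discounted_pmf_times[OF assms] unfolding h_def by (rule infsum_swap_banach[symmetric])
  also have "\<dots> = (\<Sum>t. \<gamma> ^ t * measure_pmf.expectation (p t) f)"
    unfolding rows using assms
    by (intro infsum_nat_eq_suminf summable_if_le_geometric[where c=c and \<gamma>=\<gamma>])
      (auto simp del: abs_mult intro!: abs_power_mult_le abs_expectation_pmf_le)
  finally show ?thesis .
qed

section \<open>Markov decision processes on a closed set of states\<close>

locale bounded_mdp =
  fixes P :: "'s \<Rightarrow> 'a \<Rightarrow> 's pmf" and r :: "'s \<Rightarrow> 'a \<Rightarrow> real" and \<gamma> :: real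
    and S :: "'s set" and B :: real
  assumes discount: "0 < \<gamma>" "\<gamma> < 1"
    and closed: "\<And>s a. s \<in> S \<Longrightarrow> set_pmf (P s a) \<subseteq> S"
    and abs_reward_le: "\<And>s a. s \<in> S \<Longrightarrow> \<bar>r s a\<bar> \<le> B"
begin

lemma fst_set_sa_dist: "s \<in> S \<Longrightarrow> x \<in> set_pmf (sa_dist P \<sigma> s a k) \<Longrightarrow> fst x \<in> S"
proof (induction k arbitrary: x)
  case (Suc k)
  then show ?case using closed by (auto simp: step_sa_def set_bind_pmf) (metis subsetD)
qed simp

lemma set_state_dist_subset: "set_pmf \<rho> \<subseteq> S \<Longrightarrow> set_pmf (state_dist P \<sigma> \<rho> t) \<subseteq> S"
proof (induction t)
  case (Suc t)
  then show ?case using closed by (fastforce simp: set_bind_pmf)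
qed simp

definition exp_reward :: "('s \<Rightarrow> 'a pmf) \<Rightarrow> nat \<Rightarrow> 's \<Rightarrow> 'a \<Rightarrow> real" where
  "exp_reward \<sigma> k s a = measure_pmf.expectation (sa_dist P \<sigma> s a k) (\<lambda>x. r (fst x) (snd x))"

lemma abs_discounted_exp_reward_le: "s \<in> S \<Longrightarrow> \<bar>\<gamma> ^ k * exp_reward \<sigma> k s a\<bar> \<le> B * \<gamma> ^ k"
  unfolding exp_reward_def using discount
  by (intro abs_power_mult_le abs_expectation_pmf_le) (auto intro: abs_reward_le fst_set_sa_dist)

lemma Qfun_eq_suminf: "Qfun P r \<gamma> \<sigma> s a = (\<Sum>k. \<gamma> ^ k * exp_reward \<sigma> k s a)"
  unfolding Qfun_def exp_reward_def ..

lemma abs_Qfun_le: "s \<in> S \<Longrightarrow> \<bar>Qfun P r \<gamma> \<sigma> s a\<bar> \<le> B / (1 - \<gamma>)"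
  unfolding Qfun_eq_suminf using discount
  by (intro abs_suminf_le_geometric abs_discounted_exp_reward_le) auto

lemma abs_Vfun_le: "s \<in> S \<Longrightarrow> \<bar>Vfun P r \<gamma> \<sigma> s\<bar> \<le> B / (1 - \<gamma>)"
  unfolding Vfun_def by (intro abs_expectation_pmf_le ballI abs_Qfun_le)

lemma abs_Adv_le: "s \<in> S \<Longrightarrow> \<bar>Adv P r \<gamma> \<sigma> s a\<bar> \<le> 2 * (B / (1 - \<gamma>))"
  unfolding Adv_def using abs_Qfun_le[of s \<sigma> a] abs_Vfun_le[of s \<sigma>] by linarith

lemma sa_dist_Suc_first_step:
  "sa_dist P \<sigma> s a (Suc k) = bind_pmf (P s a) (\<lambda>s'. bind_pmf (\<sigma> s') (\<lambda>a'. sa_dist P \<sigma> s' a' k))"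
proof (induction k)
  case 0
  then show ?case by (simp add: step_sa_def map_pmf_def bind_return_pmf)
next
  case (Suc k)
  then show ?case by (simp add: bind_assoc_pmf)
qed

lemma exp_reward_Suc:
  assumes "s \<in> S"
  shows "exp_reward \<sigma> (Suc k) s a = measure_pmf.expectation (P s a)
           (\<lambda>s'. measure_pmf.expectation (\<sigma> s') (\<lambda>a'. exp_reward \<sigma> k s' a'))"
proof -
  have "exp_reward \<sigma> (Suc k) s a = measure_pmf.expectation (P s a) (\<lambda>s'. measure_pmf.expectation
     (bind_pmf (\<sigma> s') (\<lambda>a'. sa_dist P \<sigma> s' a' k)) (\<lambda>x. r (fst x) (snd x)))"
    using fst_set_sa_dist[OF assms, of _ \<sigma> a "Suc k"] abs_reward_le
    unfolding exp_reward_def sa_dist_Suc_first_step by (intro expectation_bind_pmf[where c=B]) auto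
  also have "\<dots> = measure_pmf.expectation (P s a)
            (\<lambda>s'. measure_pmf.expectation (\<sigma> s') (\<lambda>a'. exp_reward \<sigma> k s' a'))"
    unfolding exp_reward_def using closed[OF assms] fst_set_sa_dist abs_reward_le
    by (intro expectation_pmf_cong ballI expectation_bind_pmf[where c=B]) (fastforce simp: set_bind_pmf)
  finally show ?thesis .
qed

lemma Vfun_eq_suminf:
  assumes "s \<in> S"
  shows "Vfun P r \<gamma> \<sigma> s = (\<Sum>k. measure_pmf.expectation (\<sigma> s) (\<lambda>a. \<gamma> ^ k * exp_reward \<sigma> k s a))"
  unfolding Vfun_def Qfun_eq_suminf using discount assms
  by (intro expectation_pmf_suminf[where c=B and \<gamma>=\<gamma>] ballI allI abs_discounted_exp_reward_le) auto

lemma Qfun_bellman: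
  assumes "s \<in> S"
  shows "Qfun P r \<gamma> \<sigma> s a = r s a + \<gamma> * measure_pmf.expectation (P s a) (Vfun P r \<gamma> \<sigma>)"
proof -
  let ?E = "\<lambda>k s'. measure_pmf.expectation (\<sigma> s') (\<lambda>a'. \<gamma> ^ k * exp_reward \<sigma> k s' a')"
  have next_bound: "\<forall>s'\<in>set_pmf (P s a). \<bar>?E k s'\<bar> \<le> B * \<gamma> ^ k" for k
    using closed[OF assms] by (intro ballI abs_expectation_pmf_le abs_discounted_exp_reward_le) blast
  have summable: "summable (\<lambda>k. \<gamma> ^ k * exp_reward \<sigma> k s a)"
    using discount by (intro summable_if_le_geometric[OF abs_discounted_exp_reward_le[OF assms]]) auto
  have "Qfun P r \<gamma> \<sigma> s a = exp_reward \<sigma> 0 s a + (\<Sum>k. \<gamma> ^ Suc k * exp_reward \<sigma> (Suc k) s a)"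
    unfolding Qfun_eq_suminf using suminf_split_head[OF summable] by simp
  also have "exp_reward \<sigma> 0 s a = r s a" by (simp add: exp_reward_def)
  also have "(\<Sum>k. \<gamma> ^ Suc k * exp_reward \<sigma> (Suc k) s a)
      = (\<Sum>k. \<gamma> * measure_pmf.expectation (P s a) (?E k))"
    by (simp add: exp_reward_Suc[OF assms] mult.assoc)
  also have "\<dots> = \<gamma> * (\<Sum>k. measure_pmf.expectation (P s a) (?E k))"
    using discount
    by (intro suminf_mult summable_if_le_geometric[OF abs_expectation_pmf_le[OF next_bound]]) auto
  also have "(\<Sum>k. measure_pmf.expectation (P s a) (?E k))
      = measure_pmf.expectation (P s a) (\<lambda>s'. \<Sum>k. ?E k s')"
    using discount next_bound
    by (intro expectation_pmf_suminf[where c=B and \<gamma>=\<gamma>, symmetric] ballI allI) auto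
  also have "\<dots> = measure_pmf.expectation (P s a) (Vfun P r \<gamma> \<sigma>)"
    by (intro expectation_pmf_cong ballI Vfun_eq_suminf[symmetric]) (use closed[OF assms] in blast)
  finally show ?thesis .
qed

lemma expectation_Adv:
  assumes "s \<in> S"
  shows "measure_pmf.expectation (\<tau> s) (Adv P r \<gamma> \<sigma> s)
    = measure_pmf.expectation (\<tau> s) (r s)
      + \<gamma> * measure_pmf.expectation (bind_pmf (\<tau> s) (P s)) (Vfun P r \<gamma> \<sigma>) - Vfun P r \<gamma> \<sigma> s"
proof -
  let ?V = "Vfun P r \<gamma> \<sigma>"
  have V: "\<forall>s'\<in>set_pmf (P s a). \<bar>?V s'\<bar> \<le> B / (1 - \<gamma>)" for a
    using closed[OF assms] abs_Vfun_le by blast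
  have "integrable (measure_pmf (\<tau> s)) (r s)"
    using assms by (intro integrable_measure_pmf_bounded[where c=B] ballI abs_reward_le)
  moreover have "integrable (measure_pmf (\<tau> s)) (\<lambda>a. \<gamma> * measure_pmf.expectation (P s a) ?V)"
    by (intro integrable_mult_right integrable_measure_pmf_bounded[where c="B / (1 - \<gamma>)"] ballI
        abs_expectation_pmf_le[OF V])
  moreover have "measure_pmf.expectation (\<tau> s) (Adv P r \<gamma> \<sigma> s)
      = measure_pmf.expectation (\<tau> s) (\<lambda>a. r s a + \<gamma> * measure_pmf.expectation (P s a) ?V - ?V s)"
    by (intro expectation_pmf_cong) (simp add: Adv_def Qfun_bellman[OF assms])
  ultimately have "measure_pmf.expectation (\<tau> s) (Adv P r \<gamma> \<sigma> s)
     = measure_pmf.expectation (\<tau> s) (r s)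
       + \<gamma> * measure_pmf.expectation (\<tau> s) (\<lambda>a. measure_pmf.expectation (P s a) ?V) - ?V s"
    by (simp add: Bochner_Integration.integral_diff Bochner_Integration.integral_add)
  also have "measure_pmf.expectation (\<tau> s) (\<lambda>a. measure_pmf.expectation (P s a) ?V)
      = measure_pmf.expectation (bind_pmf (\<tau> s) (P s)) ?V"
    using V by (intro expectation_bind_pmf[symmetric]) (auto simp: set_bind_pmf)
  finally show ?thesis .
qed

lemma expectation_Adv_self: "s \<in> S \<Longrightarrow> measure_pmf.expectation (\<sigma> s) (Adv P r \<gamma> \<sigma> s) = 0"
  unfolding Adv_def Vfun_def
  by (simp add: integrable_measure_pmf_bounded[OF ballI[OF abs_Qfun_le]])

lemma expectation_state_dist_Suc:
  fixes g :: "'s \<Rightarrow> real"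
  assumes "set_pmf \<rho> \<subseteq> S" "\<forall>s\<in>S. \<bar>g s\<bar> \<le> c"
  shows "measure_pmf.expectation (state_dist P \<tau> \<rho> (Suc t)) g
       = measure_pmf.expectation (state_dist P \<tau> \<rho> t) (\<lambda>s. measure_pmf.expectation (bind_pmf (\<tau> s) (P s)) g)"
  using set_state_dist_subset[OF assms(1), of \<tau> "Suc t"] assms(2)
  unfolding state_dist.simps by (intro expectation_bind_pmf[where c=c]) auto

lemma expectation_state_dist_Adv:
  assumes "set_pmf \<rho> \<subseteq> S"
  shows "measure_pmf.expectation (state_dist P \<tau> \<rho> t) (\<lambda>s. measure_pmf.expectation (\<tau> s) (Adv P r \<gamma> \<sigma> s))
    = measure_pmf.expectation (state_dist P \<tau> \<rho> t) (\<lambda>s. measure_pmf.expectation (\<tau> s) (r s))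
      + (\<gamma> * measure_pmf.expectation (state_dist P \<tau> \<rho> (Suc t)) (Vfun P r \<gamma> \<sigma>)
         - measure_pmf.expectation (state_dist P \<tau> \<rho> t) (Vfun P r \<gamma> \<sigma>))"
proof -
  let ?d = "state_dist P \<tau> \<rho> t" and ?V = "Vfun P r \<gamma> \<sigma>"
  let ?R = "\<lambda>s. measure_pmf.expectation (\<tau> s) (r s)"
  let ?N = "\<lambda>s. measure_pmf.expectation (bind_pmf (\<tau> s) (P s)) ?V"
  have d: "\<forall>s\<in>set_pmf ?d. s \<in> S" using set_state_dist_subset[OF assms] by blast
  have V: "\<forall>s\<in>S. \<bar>?V s\<bar> \<le> B / (1 - \<gamma>)" using abs_Vfun_le by blast
  have "integrable ?d ?R"
    using d abs_reward_le by (intro integrable_measure_pmf_bounded[where c=B] ballI abs_expectation_pmf_le) blast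
  moreover have "integrable ?d (\<lambda>s. \<gamma> * ?N s)"
    using d V closed
    by (intro integrable_mult_right integrable_measure_pmf_bounded ballI abs_expectation_pmf_le)
      (fastforce simp: set_bind_pmf)
  moreover have "integrable ?d ?V"
    using d V by (intro integrable_measure_pmf_bounded) blast
  ultimately have "measure_pmf.expectation ?d (\<lambda>s. measure_pmf.expectation (\<tau> s) (Adv P r \<gamma> \<sigma> s))
      = measure_pmf.expectation ?d ?R + \<gamma> * measure_pmf.expectation ?d ?N - measure_pmf.expectation ?d ?V"
    using d by (subst expectation_pmf_cong[where g="\<lambda>s. ?R s + \<gamma> * ?N s - ?V s"])
      (simp_all add: expectation_Adv)
  also have "measure_pmf.expectation ?d ?N = measure_pmf.expectation (state_dist P \<tau> \<rho> (Suc t)) ?V"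
    using V by (intro expectation_state_dist_Suc[OF assms, symmetric])
  finally show ?thesis by simp
qed

lemma sums_discounted_expectation_Adv:
  assumes "set_pmf \<rho> \<subseteq> S"
  shows "(\<lambda>t. \<gamma> ^ t * measure_pmf.expectation (state_dist P \<tau> \<rho> t)
            (\<lambda>s. measure_pmf.expectation (\<tau> s) (Adv P r \<gamma> \<sigma> s)))
         sums (eta_mdp P r \<rho> \<gamma> \<tau> - measure_pmf.expectation \<rho> (Vfun P r \<gamma> \<sigma>))"
proof -
  let ?d = "state_dist P \<tau> \<rho>" and ?V = "Vfun P r \<gamma> \<sigma>"
  let ?R = "\<lambda>s. measure_pmf.expectation (\<tau> s) (r s)"
  have d: "\<forall>s\<in>set_pmf (?d t). s \<in> S" for t using set_state_dist_subset[OF assms] by blast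
  have "(\<lambda>t. \<gamma> ^ t * measure_pmf.expectation (?d t) ?R) sums eta_mdp P r \<rho> \<gamma> \<tau>"
    unfolding eta_mdp_def using discount d abs_reward_le
    by (intro summable_sums summable_discounted_expectation[where c=B] ballI abs_expectation_pmf_le) auto
  moreover have "(\<lambda>t. \<gamma> ^ t * (\<gamma> * measure_pmf.expectation (?d (Suc t)) ?V - measure_pmf.expectation (?d t) ?V))
      sums (- measure_pmf.expectation (?d 0) ?V)"
    using discount d abs_Vfun_le
    by (intro sums_discounted_telescoping[where c="B / (1 - \<gamma>)"] abs_expectation_pmf_le) auto
  ultimately have "(\<lambda>t. \<gamma> ^ t * measure_pmf.expectation (?d t) ?R
      + \<gamma> ^ t * (\<gamma> * measure_pmf.expectation (?d (Suc t)) ?V - measure_pmf.expectation (?d t) ?V))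
      sums (eta_mdp P r \<rho> \<gamma> \<tau> + - measure_pmf.expectation (?d 0) ?V)"
    by (rule sums_add)
  then show ?thesis
    by (simp only: expectation_state_dist_Adv[OF assms] distrib_left state_dist.simps(1)
        diff_conv_add_uminus)
qed

lemma eta_mdp_eq_expectation_Vfun:
  assumes "set_pmf \<rho> \<subseteq> S"
  shows "eta_mdp P r \<rho> \<gamma> \<sigma> = measure_pmf.expectation \<rho> (Vfun P r \<gamma> \<sigma>)"
proof -
  have "measure_pmf.expectation (state_dist P \<sigma> \<rho> t) (\<lambda>s. measure_pmf.expectation (\<sigma> s) (Adv P r \<gamma> \<sigma> s)) = 0"
    for t
    using set_state_dist_subset[OF assms, of \<sigma> t] expectation_Adv_self
    by (subst expectation_pmf_cong[where g="\<lambda>_. 0"]) auto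
  then show ?thesis
    using sums_discounted_expectation_Adv[OF assms, of \<sigma> \<sigma>] sums_zero sums_unique2 by fastforce
qed

lemma abs_eta_mdp_le: "set_pmf \<rho> \<subseteq> S \<Longrightarrow> \<bar>eta_mdp P r \<rho> \<gamma> \<sigma>\<bar> \<le> B / (1 - \<gamma>)"
  unfolding eta_mdp_eq_expectation_Vfun by (intro abs_expectation_pmf_le) (auto intro: abs_Vfun_le)

lemma visit_exp_eq_suminf:
  fixes f :: "'s \<Rightarrow> real"
  assumes "set_pmf \<rho> \<subseteq> S" "\<forall>s\<in>S. \<bar>f s\<bar> \<le> c"
  shows "visit_exp P \<tau> \<rho> \<gamma> f = (\<Sum>t. \<gamma> ^ t * measure_pmf.expectation (state_dist P \<tau> \<rho> t) f)"
  unfolding visit_exp_def visit_def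
  using discount set_state_dist_subset[OF assms(1)] assms(2)
  by (intro infsum_discounted_pmf_times[where c=c]) auto

lemma abs_visit_exp_le:
  fixes f :: "'s \<Rightarrow> real"
  assumes "set_pmf \<rho> \<subseteq> S" "\<forall>s\<in>S. \<bar>f s\<bar> \<le> c"
  shows "\<bar>visit_exp P \<tau> \<rho> \<gamma> f\<bar> \<le> c / (1 - \<gamma>)"
  unfolding visit_exp_eq_suminf[OF assms]
  using discount set_state_dist_subset[OF assms(1)] assms(2)
  by (intro abs_suminf_le_geometric abs_power_mult_le abs_expectation_pmf_le) auto


lemma abs_expectation_next_state_diff_le:
  fixes g :: "'s \<Rightarrow> real"
  assumes "s \<in> S" "\<forall>s\<in>S. \<bar>g s\<bar> \<le> c"
  shows "\<bar>measure_pmf.expectation (bind_pmf (\<pi>' s) (P s)) g - measure_pmf.expectation (bind_pmf (\<pi> s) (P s)) g\<bar>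
           \<le> 2 * c * tv_dist (\<pi> s) (\<pi>' s)"
proof -
  define h where "h a = measure_pmf.expectation (P s a) g" for a
  have h: "\<forall>a. \<bar>h a\<bar> \<le> c"
    unfolding h_def using closed assms by (blast intro: abs_expectation_pmf_le)
  have "measure_pmf.expectation (bind_pmf \<tau> (P s)) g = measure_pmf.expectation \<tau> h" for \<tau>
    unfolding h_def using closed assms by (intro expectation_bind_pmf[where c=c]) (auto simp: set_bind_pmf)
  then show ?thesis
    using abs_expectation_diff_le_tv_dist[OF h, of "\<pi> s" "\<pi>' s"] by (simp add: abs_minus_commute)
qed

lemma abs_expectation_state_dist_diff_le:
  fixes g :: "'s \<Rightarrow> real"
  assumes \<rho>: "set_pmf \<rho> \<subseteq> S" and tv: "\<forall>s\<in>S. tv_dist (\<pi> s) (\<pi>' s) \<le> \<alpha>"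
    and "\<forall>s\<in>S. \<bar>g s\<bar> \<le> c"
  shows "\<bar>measure_pmf.expectation (state_dist P \<pi>' \<rho> t) g - measure_pmf.expectation (state_dist P \<pi> \<rho> t) g\<bar>
           \<le> 2 * real t * \<alpha> * c"
  using assms(3)
proof (induction t arbitrary: g)
  case (Suc t)
  let ?d = "state_dist P \<pi> \<rho> t" and ?d' = "state_dist P \<pi>' \<rho> t"
  define G where "G \<sigma> s = measure_pmf.expectation (bind_pmf (\<sigma> s) (P s)) g" for \<sigma> s
  have G: "\<forall>s\<in>S. \<bar>G \<sigma> s\<bar> \<le> c" for \<sigma>
    unfolding G_def using closed Suc.prems by (fastforce intro!: abs_expectation_pmf_le simp: set_bind_pmf)
  have d': "\<forall>s\<in>set_pmf ?d'. s \<in> S" using set_state_dist_subset[OF \<rho>] by blast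
  obtain s0 where "s0 \<in> S" using \<rho> set_pmf_not_empty[of \<rho>] by blast
  then have "0 \<le> c" using Suc.prems by force
  have "\<bar>G \<pi>' s - G \<pi> s\<bar> \<le> 2 * c * \<alpha>" if "s \<in> S" for s
  proof -
    have "2 * c * tv_dist (\<pi> s) (\<pi>' s) \<le> 2 * c * \<alpha>"
      using tv that \<open>0 \<le> c\<close> by (intro mult_left_mono) auto
    then show ?thesis
      using abs_expectation_next_state_diff_le[OF that Suc.prems, of \<pi>' \<pi>] unfolding G_def by linarith
  qed
  then have "\<bar>measure_pmf.expectation ?d' (\<lambda>s. G \<pi>' s - G \<pi> s)\<bar> \<le> 2 * c * \<alpha>"
    using d' by (intro abs_expectation_pmf_le) blast
  moreover have "measure_pmf.expectation ?d' (\<lambda>s. G \<pi>' s - G \<pi> s)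
      = measure_pmf.expectation ?d' (G \<pi>') - measure_pmf.expectation ?d' (G \<pi>)"
    using d' G by (intro Bochner_Integration.integral_diff integrable_measure_pmf_bounded[where c=c]) blast+
  moreover have "\<bar>measure_pmf.expectation ?d' (G \<pi>) - measure_pmf.expectation ?d (G \<pi>)\<bar> \<le> 2 * real t * \<alpha> * c"
    using Suc.IH[OF G] .
  ultimately have "\<bar>measure_pmf.expectation ?d' (G \<pi>') - measure_pmf.expectation ?d (G \<pi>)\<bar>
      \<le> 2 * real t * \<alpha> * c + 2 * c * \<alpha>"
    by (simp only: abs_le_iff) linarith
  then show ?case
    unfolding G_def expectation_state_dist_Suc[OF \<rho> Suc.prems] by (simp add: algebra_simps)
qed simp

theorem performance_difference:
  assumes "set_pmf \<rho> \<subseteq> S"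
  shows "eta_mdp P r \<rho> \<gamma> \<pi>' = eta_mdp P r \<rho> \<gamma> \<pi>
           + visit_exp P \<pi>' \<rho> \<gamma> (\<lambda>s. measure_pmf.expectation (\<pi>' s) (Adv P r \<gamma> \<pi> s))"
proof -
  have "visit_exp P \<pi>' \<rho> \<gamma> (\<lambda>s. measure_pmf.expectation (\<pi>' s) (Adv P r \<gamma> \<pi> s))
      = (\<Sum>t. \<gamma> ^ t * measure_pmf.expectation (state_dist P \<pi>' \<rho> t)
            (\<lambda>s. measure_pmf.expectation (\<pi>' s) (Adv P r \<gamma> \<pi> s)))"
    using assms abs_Adv_le
    by (intro visit_exp_eq_suminf[where c="2 * (B / (1 - \<gamma>))"] ballI abs_expectation_pmf_le) auto
  also have "\<dots> = eta_mdp P r \<rho> \<gamma> \<pi>' - eta_mdp P r \<rho> \<gamma> \<pi>"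
    using sums_discounted_expectation_Adv[OF assms, of \<pi>' \<pi>]
    by (simp add: sums_iff eta_mdp_eq_expectation_Vfun[OF assms])
  finally show ?thesis by simp
qed

theorem surrogate_lower_bound:
  assumes \<rho>: "set_pmf \<rho> \<subseteq> S" and tv: "\<forall>s\<in>S. tv_dist (\<pi> s) (\<pi>' s) \<le> \<alpha>"
    and Adv: "\<forall>s\<in>S. \<forall>a. \<bar>Adv P r \<gamma> \<pi> s a\<bar> \<le> \<epsilon>"
  shows "eta_mdp P r \<rho> \<gamma> \<pi>
           + visit_exp P \<pi> \<rho> \<gamma> (\<lambda>s. measure_pmf.expectation (\<pi>' s) (Adv P r \<gamma> \<pi> s))
           - 4 * \<gamma> * \<epsilon> / (1 - \<gamma>)\<^sup>2 * \<alpha>\<^sup>2 \<le> eta_mdp P r \<rho> \<gamma> \<pi>'"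
proof -
  define A where "A s = measure_pmf.expectation (\<pi>' s) (Adv P r \<gamma> \<pi> s)" for s
  let ?d = "state_dist P \<pi> \<rho>" and ?d' = "state_dist P \<pi>' \<rho>"
  obtain s0 where "s0 \<in> S" using \<rho> set_pmf_not_empty[of \<rho>] by blast
  then have "0 \<le> \<epsilon>" using Adv by (meson abs_ge_zero order_trans)
  have A: "\<forall>s\<in>S. \<bar>A s\<bar> \<le> 2 * \<epsilon> * \<alpha>"
  proof
    fix s assume s: "s \<in> S"
    have "\<bar>A s\<bar> = \<bar>measure_pmf.expectation (\<pi> s) (Adv P r \<gamma> \<pi> s) - A s\<bar>"
      using expectation_Adv_self[OF s] by simp
    also have "\<dots> \<le> 2 * \<epsilon> * tv_dist (\<pi> s) (\<pi>' s)"
      unfolding A_def using Adv s by (intro abs_expectation_diff_le_tv_dist) auto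
    also have "\<dots> \<le> 2 * \<epsilon> * \<alpha>" using tv s \<open>0 \<le> \<epsilon>\<close> by (intro mult_left_mono) auto
    finally show "\<bar>A s\<bar> \<le> 2 * \<epsilon> * \<alpha>" .
  qed
  have diff_sums: "(\<lambda>t. \<gamma> ^ t * measure_pmf.expectation (?d' t) A - \<gamma> ^ t * measure_pmf.expectation (?d t) A)
      sums (eta_mdp P r \<rho> \<gamma> \<pi>' - eta_mdp P r \<rho> \<gamma> \<pi> - visit_exp P \<pi> \<rho> \<gamma> A)"
  proof (rule sums_diff)
    show "(\<lambda>t. \<gamma> ^ t * measure_pmf.expectation (?d' t) A) sums (eta_mdp P r \<rho> \<gamma> \<pi>' - eta_mdp P r \<rho> \<gamma> \<pi>)"
      using sums_discounted_expectation_Adv[OF \<rho>, of \<pi>' \<pi>]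
      unfolding A_def[abs_def] eta_mdp_eq_expectation_Vfun[OF \<rho>, of \<pi>, symmetric] .
    show "(\<lambda>t. \<gamma> ^ t * measure_pmf.expectation (?d t) A) sums visit_exp P \<pi> \<rho> \<gamma> A"
      unfolding visit_exp_eq_suminf[OF \<rho> A] using discount set_state_dist_subset[OF \<rho>] A
      by (intro summable_sums summable_discounted_expectation[where c="2 * \<epsilon> * \<alpha>"]) auto
  qed
  have bound_sums: "(\<lambda>t. - (4 * \<epsilon> * \<alpha>\<^sup>2 * (real t * \<gamma> ^ t))) sums (- (4 * \<epsilon> * \<alpha>\<^sup>2 * (\<gamma> / (1 - \<gamma>)\<^sup>2)))"
    using discount by (intro sums_minus sums_mult sums_of_nat_mult_power) auto
  have termwise: "- (4 * \<epsilon> * \<alpha>\<^sup>2 * (real t * \<gamma> ^ t))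
      \<le> \<gamma> ^ t * measure_pmf.expectation (?d' t) A - \<gamma> ^ t * measure_pmf.expectation (?d t) A" for t
  proof -
    have "\<bar>measure_pmf.expectation (?d' t) A - measure_pmf.expectation (?d t) A\<bar> \<le> 2 * real t * \<alpha> * (2 * \<epsilon> * \<alpha>)"
      by (rule abs_expectation_state_dist_diff_le[OF \<rho> tv A])
    then have "\<bar>\<gamma> ^ t * (measure_pmf.expectation (?d' t) A - measure_pmf.expectation (?d t) A)\<bar>
        \<le> 2 * real t * \<alpha> * (2 * \<epsilon> * \<alpha>) * \<gamma> ^ t"
      using discount by (intro abs_power_mult_le) auto
    then have "- (2 * real t * \<alpha> * (2 * \<epsilon> * \<alpha>) * \<gamma> ^ t)
        \<le> \<gamma> ^ t * (measure_pmf.expectation (?d' t) A - measure_pmf.expectation (?d t) A)"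
      by (simp only: abs_le_iff) linarith
    then show ?thesis by (simp add: power2_eq_square right_diff_distrib mult_ac)
  qed
  have "- (4 * \<epsilon> * \<alpha>\<^sup>2 * (\<gamma> / (1 - \<gamma>)\<^sup>2))
      \<le> eta_mdp P r \<rho> \<gamma> \<pi>' - eta_mdp P r \<rho> \<gamma> \<pi> - visit_exp P \<pi> \<rho> \<gamma> A"
    using termwise bound_sums diff_sums by (rule sums_le)
  then show ?thesis unfolding A_def[abs_def] by (simp add: algebra_simps)
qed

end

section \<open>Averaging over the training MDPs\<close>

lemma integrable_p_train:
  fixes f :: "'m \<Rightarrow> real"
  assumes "prob_space pM" "Mt \<in> sets pM" "f \<in> borel_measurable pM"
    and "\<And>m. m \<in> space pM \<Longrightarrow> \<bar>f m\<bar> \<le> C"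
  shows "integrable (p_train pM Mt) f"
proof -
  interpret prob_space pM by fact
  let ?w = "\<lambda>m. indicator Mt m / measure pM Mt :: real"
  have w: "?w \<in> borel_measurable pM" using assms(2) by measurable
  have "integrable pM (\<lambda>m. ?w m *\<^sub>R f m)"
  proof (rule integrable_const_bound[where B="C / measure pM Mt"])
    show "AE m in pM. norm (?w m *\<^sub>R f m) \<le> C / measure pM Mt"
    proof (rule AE_I2)
      fix m assume "m \<in> space pM"
      then have "?w m * \<bar>f m\<bar> \<le> 1 / measure pM Mt * C"
        using assms(4) by (intro mult_mono) (auto simp: indicator_def divide_right_mono)
      then show "norm (?w m *\<^sub>R f m) \<le> C / measure pM Mt" by (simp add: abs_mult)
    qed
    show "(\<lambda>m. ?w m *\<^sub>R f m) \<in> borel_measurable pM"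
      using w assms(3) by measurable
  qed
  then show ?thesis
    unfolding p_train_def using integrable_density[OF assms(3) w] by simp
qed

lemma E_train_cong:
  assumes "\<And>m. m \<in> space pM \<Longrightarrow> f m = g m"
  shows "E_train pM Mt f = E_train pM Mt g"
  unfolding E_train_def using assms by (intro Bochner_Integration.integral_cong) (auto simp: p_train_def)

lemma E_train_mono:
  assumes "integrable (p_train pM Mt) f" "integrable (p_train pM Mt) g"
    and "\<And>m. m \<in> space pM \<Longrightarrow> f m \<le> g m"
  shows "E_train pM Mt f \<le> E_train pM Mt g"
  unfolding E_train_def using assms by (intro integral_mono) (auto simp: p_train_def)

lemma
  fixes g :: "'u \<Rightarrow> real"
  assumes "\<And>u. 0 \<le> g u" "\<And>u. g u \<le> 1"
  shows le_sqrt_SUP_power2: "g u \<le> sqrt (SUP u. (g u)\<^sup>2)"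
    and SUP_power2_unit_interval: "(SUP u. (g u)\<^sup>2) \<in> {0..1}"
proof -
  have "bdd_above (range (\<lambda>u. (g u)\<^sup>2))"
    using assms by (intro bdd_aboveI[where M=1]) (auto simp: power_le_one)
  then have le: "(g u)\<^sup>2 \<le> (SUP u. (g u)\<^sup>2)" for u
    by (rule cSUP_upper[rotated]) simp
  show "g u \<le> sqrt (SUP u. (g u)\<^sup>2)"
    using real_sqrt_le_mono[OF le] assms by simp
  have "0 \<le> (SUP u. (g u)\<^sup>2)"
    using le[of u] by (meson order_trans zero_le_power2)
  moreover have "(SUP u. (g u)\<^sup>2) \<le> 1"
    using assms by (intro cSUP_least) (auto simp: power_le_one)
  ultimately show "(SUP u. (g u)\<^sup>2) \<in> {0..1}" by simp
qed

locale mdp_family =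
  fixes pM :: "'m measure" and P :: "'m \<Rightarrow> 's \<Rightarrow> 'a \<Rightarrow> 's pmf" and r :: "'m \<Rightarrow> 's \<Rightarrow> 'a \<Rightarrow> real"
    and rho0 :: "'m \<Rightarrow> 's pmf" and \<gamma> :: real and \<phi> :: "'m \<Rightarrow> 'u \<Rightarrow> 's" and B :: real
  assumes discount: "0 < \<gamma>" "\<gamma> < 1"
    and rho0_range: "\<forall>m\<in>space pM. set_pmf (rho0 m) \<subseteq> range (\<phi> m)"
    and P_range: "\<forall>m\<in>space pM. \<forall>s\<in>range (\<phi> m). \<forall>a. set_pmf (P m s a) \<subseteq> range (\<phi> m)"
    and abs_r_le: "\<forall>m\<in>space pM. \<forall>s\<in>range (\<phi> m). \<forall>a. \<bar>r m s a\<bar> \<le> B"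
begin

lemma bounded_mdp: "m \<in> space pM \<Longrightarrow> bounded_mdp (P m) (r m) \<gamma> (range (\<phi> m)) B"
  by unfold_locales (use discount P_range abs_r_le in blast)+

lemma abs_Adv_le_A_max:
  assumes "m \<in> space pM" "s \<in> range (\<phi> m)"
  shows "\<bar>Adv (P m) (r m) \<gamma> \<pi> s a\<bar> \<le> A_max pM P r \<gamma> \<phi> \<pi>"
  unfolding A_max_def using assms bounded_mdp.abs_Adv_le[OF bounded_mdp]
  by (intro cSup_upper bdd_aboveI) blast+

lemma abs_eta_mdp_le_at:
  "m \<in> space pM \<Longrightarrow> \<bar>eta_mdp (P m) (r m) (rho0 m) \<gamma> \<sigma>\<bar> \<le> B / (1 - \<gamma>)"
  using rho0_range by (blast intro: bounded_mdp.abs_eta_mdp_le[OF bounded_mdp])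

lemma abs_visit_exp_Adv_le_at:
  assumes "m \<in> space pM"
  shows "\<bar>visit_exp (P m) \<sigma> (rho0 m) \<gamma> (\<lambda>s. measure_pmf.expectation (\<pi>' s) (Adv (P m) (r m) \<gamma> \<pi> s))\<bar>
           \<le> 2 * (B / (1 - \<gamma>)) / (1 - \<gamma>)"
  using assms rho0_range bounded_mdp.abs_Adv_le[OF bounded_mdp[OF assms]]
  by (intro bounded_mdp.abs_visit_exp_le[OF bounded_mdp] ballI abs_expectation_pmf_le) blast+

lemma SUP_tv_dist_power2_unit_interval:
  "(SUP u. (tv_dist (\<pi> (\<phi> m u)) (\<pi>' (\<phi> m u)))\<^sup>2) \<in> {0..1}"
  by (rule SUP_power2_unit_interval) (simp_all add: tv_dist_nonneg tv_dist_le_1)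

lemma performance_difference_at:
  "m \<in> space pM \<Longrightarrow> eta_mdp (P m) (r m) (rho0 m) \<gamma> \<pi>' = eta_mdp (P m) (r m) (rho0 m) \<gamma> \<pi>
     + visit_exp (P m) \<pi>' (rho0 m) \<gamma> (\<lambda>s. measure_pmf.expectation (\<pi>' s) (Adv (P m) (r m) \<gamma> \<pi> s))"
  using rho0_range by (blast intro: bounded_mdp.performance_difference[OF bounded_mdp])

lemma surrogate_lower_bound_at:
  assumes "m \<in> space pM"
  shows "eta_mdp (P m) (r m) (rho0 m) \<gamma> \<pi>
      + visit_exp (P m) \<pi> (rho0 m) \<gamma> (\<lambda>s. measure_pmf.expectation (\<pi>' s) (Adv (P m) (r m) \<gamma> \<pi> s))
      - 4 * \<gamma> * A_max pM P r \<gamma> \<phi> \<pi> / (1 - \<gamma>)\<^sup>2 * (SUP u. (tv_dist (\<pi> (\<phi> m u)) (\<pi>' (\<phi> m u)))\<^sup>2)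
    \<le> eta_mdp (P m) (r m) (rho0 m) \<gamma> \<pi>'"
proof -
  let ?\<beta> = "SUP u. (tv_dist (\<pi> (\<phi> m u)) (\<pi>' (\<phi> m u)))\<^sup>2"
  have "\<forall>s\<in>range (\<phi> m). tv_dist (\<pi> s) (\<pi>' s) \<le> sqrt ?\<beta>"
    by (auto intro!: le_sqrt_SUP_power2 tv_dist_nonneg tv_dist_le_1)
  moreover have "0 \<le> ?\<beta>"
    using SUP_tv_dist_power2_unit_interval[where \<pi>=\<pi> and \<pi>'=\<pi>' and m=m] by simp
  ultimately show ?thesis
    using bounded_mdp.surrogate_lower_bound[OF bounded_mdp[OF assms], of "rho0 m" \<pi> \<pi>' "sqrt ?\<beta>"]
      rho0_range abs_Adv_le_A_max assms
    by simp
qed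

end

theorem lemma1:
  fixes pM :: "'m measure" and Mtrain :: "'m set"
    and P :: "'m \<Rightarrow> 's \<Rightarrow> 'a \<Rightarrow> 's pmf" and r :: "'m \<Rightarrow> 's \<Rightarrow> 'a \<Rightarrow> real"
    and rho0 :: "'m \<Rightarrow> 's pmf" and \<gamma> :: real and \<phi> :: "'m \<Rightarrow> 'u \<Rightarrow> 's"
    and pol pol' :: "'s \<Rightarrow> 'a pmf" and B :: real
  assumes "prob_space pM"
    and "Mtrain \<in> sets pM" and "Mtrain \<subseteq> space pM" and "measure pM Mtrain > 0"
    and "0 < \<gamma>" and "\<gamma> < 1"
    and "\<forall>m\<in>space pM. set_pmf (rho0 m) \<subseteq> range (\<phi> m)"
    and "\<forall>m\<in>space pM. \<forall>s\<in>range (\<phi> m). \<forall>a. set_pmf (P m s a) \<subseteq> range (\<phi> m)"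
    and "\<forall>m\<in>space pM. \<forall>s\<in>range (\<phi> m). \<forall>a. \<bar>r m s a\<bar> \<le> B"
    and "(\<lambda>m. eta_mdp (P m) (r m) (rho0 m) \<gamma> pol) \<in> borel_measurable pM"
    and "(\<lambda>m. eta_mdp (P m) (r m) (rho0 m) \<gamma> pol') \<in> borel_measurable pM"
    and "(\<lambda>m. visit_exp (P m) pol' (rho0 m) \<gamma>
            (\<lambda>s. measure_pmf.expectation (pol' s) (\<lambda>a. Adv (P m) (r m) \<gamma> pol s a))) \<in> borel_measurable pM"
    and "(\<lambda>m. visit_exp (P m) pol (rho0 m) \<gamma>
            (\<lambda>s. measure_pmf.expectation (pol' s) (\<lambda>a. Adv (P m) (r m) \<gamma> pol s a))) \<in> borel_measurable pM"
    and "(\<lambda>m. SUP u. (tv_dist (pol (\<phi> m u)) (pol' (\<phi> m u)))\<^sup>2) \<in> borel_measurable pM"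
  shows "eta pM Mtrain P r rho0 \<gamma> pol' =
           eta pM Mtrain P r rho0 \<gamma> pol + adv_term pM Mtrain P r rho0 \<gamma> pol pol' pol'
         \<and> eta pM Mtrain P r rho0 \<gamma> pol' \<ge>
           (L_surr pM Mtrain P r rho0 \<gamma> pol pol'
           - 4 * \<gamma> * A_max pM P r \<gamma> \<phi> pol / (1 - \<gamma>)\<^sup>2
             * E_train pM Mtrain (\<lambda>m. SUP u. (tv_dist (pol (\<phi> m u)) (pol' (\<phi> m u)))\<^sup>2))"
proof -
  interpret mdp_family pM P r rho0 \<gamma> \<phi> B
    using assms(5-9) by unfold_locales
  let ?\<eta> = "\<lambda>\<sigma> m. eta_mdp (P m) (r m) (rho0 m) \<gamma> \<sigma>"
  let ?L = "\<lambda>\<sigma> m. visit_exp (P m) \<sigma> (rho0 m) \<gamma> (\<lambda>s. measure_pmf.expectation (pol' s) (Adv (P m) (r m) \<gamma> pol s))"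
  let ?\<beta> = "\<lambda>m. SUP u. (tv_dist (pol (\<phi> m u)) (pol' (\<phi> m u)))\<^sup>2"
  let ?K = "4 * \<gamma> * A_max pM P r \<gamma> \<phi> pol / (1 - \<gamma>)\<^sup>2"
  let ?E = "E_train pM Mtrain"
  have int_\<eta>: "integrable (p_train pM Mtrain) (?\<eta> \<sigma>)" if "?\<eta> \<sigma> \<in> borel_measurable pM" for \<sigma>
    by (rule integrable_p_train[OF assms(1,2) that abs_eta_mdp_le_at])
  have int_L: "integrable (p_train pM Mtrain) (?L \<sigma>)" if "?L \<sigma> \<in> borel_measurable pM" for \<sigma>
    by (rule integrable_p_train[OF assms(1,2) that abs_visit_exp_Adv_le_at])
  have int_\<beta>: "integrable (p_train pM Mtrain) ?\<beta>"
    using SUP_tv_dist_power2_unit_interval[where \<pi>=pol and \<pi>'=pol']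
    by (intro integrable_p_train[OF assms(1,2,14), where C=1]) auto
  have "?E (?\<eta> pol') = ?E (\<lambda>m. ?\<eta> pol m + ?L pol' m)"
    by (intro E_train_cong performance_difference_at)
  also have "\<dots> = ?E (?\<eta> pol) + ?E (?L pol')"
    unfolding E_train_def using int_\<eta>[OF assms(10)] int_L[OF assms(12)] by simp
  finally have "?E (?\<eta> pol') = ?E (?\<eta> pol) + ?E (?L pol')" .
  moreover have "?E (?\<eta> pol) + ?E (?L pol) - ?K * ?E ?\<beta> = ?E (\<lambda>m. ?\<eta> pol m + ?L pol m - ?K * ?\<beta> m)"
    unfolding E_train_def using int_\<eta>[OF assms(10)] int_L[OF assms(13)] int_\<beta> by simp
  moreover have "\<dots> \<le> ?E (?\<eta> pol')"
    using int_\<eta>[OF assms(10)] int_\<eta>[OF assms(11)] int_L[OF assms(13)] int_\<beta>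
    by (intro E_train_mono surrogate_lower_bound_at) auto
  ultimately show ?thesis
    unfolding eta_def adv_term_def L_surr_def by simp
qed

end
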